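(* Let $G$ be a finite group. Then $G$ is a nested GVZ-group if and only if $U(G/N)>1$ for every proper normal subgroup $N$ of $G$.
   Context: All groups are finite. For $\chi\in\mathrm{Irr}(G)$, the center of $\chi$ is $Z(\chi)=\{g\in G : |\chi(g)|=\chi(1)\}$. A group is nested if for any two of its irreducible characters $\chi,\psi$ either $Z(\chi)\le Z(\psi)$ or $Z(\psi)\le Z(\chi)$. A group is a GVZ-group if every irreducible character vanishes on the complement of its center. For a group $H$ and a normal subgroup $M$ of $H$, $\mathrm{Irr}(H\mid M)$ is the set of $\chi\in\mathrm{Irr}(H)$ with $M\not\le\ker(\chi)$, and $V(H\mid M)$ is the subgroup generated by all $h\in H$ such that $\chi(h)\neq 0$ for some $\chi\in\mathrm{Irr}(H\mid M)$ (with $V(H\mid 1)=1$). For a normal subgroup $L$ of $H$, $U(H\mid L)$ is the product of all normal subgroups $M$ of $H$ with $V(H\mid M)\le L$, and $U(H)=U(H\mid Z(H))$. Here $U(G/N)$ is computed in the group $H=G/N$. *)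

theory Defs
  imports Complex_Main "HOL-Algebra.Algebra" "Jordan_Normal_Form.Matrix"
begin

definition mtrace :: "complex mat \<Rightarrow> complex" where
  "mtrace A = (\<Sum>i<dim_row A. A $$ (i, i))"

definition is_rep :: "('a, 'b) monoid_scheme \<Rightarrow> nat \<Rightarrow> ('a \<Rightarrow> complex mat) \<Rightarrow> bool" where
  "is_rep G n \<rho> \<longleftrightarrow> n > 0 \<and>
     (\<forall>g\<in>carrier G. \<rho> g \<in> carrier_mat n n) \<and>
     \<rho> \<one>\<^bsub>G\<^esub> = 1\<^sub>m n \<and>
     (\<forall>g\<in>carrier G. \<forall>h\<in>carrier G. \<rho> (g \<otimes>\<^bsub>G\<^esub> h) = \<rho> g * \<rho> h)"

definition is_subspace :: "nat \<Rightarrow> complex vec set \<Rightarrow> bool" where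
  "is_subspace n W \<longleftrightarrow> W \<subseteq> carrier_vec n \<and> 0\<^sub>v n \<in> W \<and>
     (\<forall>v\<in>W. \<forall>w\<in>W. v + w \<in> W) \<and> (\<forall>c. \<forall>v\<in>W. c \<cdot>\<^sub>v v \<in> W)"

definition irreducible_rep :: "('a, 'b) monoid_scheme \<Rightarrow> nat \<Rightarrow> ('a \<Rightarrow> complex mat) \<Rightarrow> bool" where
  "irreducible_rep G n \<rho> \<longleftrightarrow> is_rep G n \<rho> \<and>
     (\<forall>W. is_subspace n W \<and> (\<forall>g\<in>carrier G. \<forall>w\<in>W. \<rho> g *\<^sub>v w \<in> W)
          \<longrightarrow> W = {0\<^sub>v n} \<or> W = carrier_vec n)"

definition Irr :: "('a, 'b) monoid_scheme \<Rightarrow> ('a \<Rightarrow> complex) set" where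
  "Irr G = {\<chi>. \<exists>n \<rho>. irreducible_rep G n \<rho> \<and> \<chi> = (\<lambda>g\<in>carrier G. mtrace (\<rho> g))}"

definition char_center :: "('a, 'b) monoid_scheme \<Rightarrow> ('a \<Rightarrow> complex) \<Rightarrow> 'a set" where
  "char_center G \<chi> = {g \<in> carrier G. cmod (\<chi> g) = cmod (\<chi> \<one>\<^bsub>G\<^esub>)}"

definition char_ker :: "('a, 'b) monoid_scheme \<Rightarrow> ('a \<Rightarrow> complex) \<Rightarrow> 'a set" where
  "char_ker G \<chi> = {g \<in> carrier G. \<chi> g = \<chi> \<one>\<^bsub>G\<^esub>}"

definition nested_group :: "('a, 'b) monoid_scheme \<Rightarrow> bool" where
  "nested_group G \<longleftrightarrow> (\<forall>\<chi>\<in>Irr G. \<forall>\<psi>\<in>Irr G.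
      char_center G \<chi> \<subseteq> char_center G \<psi> \<or> char_center G \<psi> \<subseteq> char_center G \<chi>)"

definition GVZ_group :: "('a, 'b) monoid_scheme \<Rightarrow> bool" where
  "GVZ_group G \<longleftrightarrow> (\<forall>\<chi>\<in>Irr G. \<forall>g\<in>carrier G - char_center G \<chi>. \<chi> g = 0)"

definition group_center :: "('a, 'b) monoid_scheme \<Rightarrow> 'a set" where
  "group_center G = {z \<in> carrier G. \<forall>g\<in>carrier G. z \<otimes>\<^bsub>G\<^esub> g = g \<otimes>\<^bsub>G\<^esub> z}"

definition Irr_rel :: "('a, 'b) monoid_scheme \<Rightarrow> 'a set \<Rightarrow> ('a \<Rightarrow> complex) set" where
  "Irr_rel H M = {\<chi> \<in> Irr H. \<not> M \<subseteq> char_ker H \<chi>}"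

text \<open>V(H|M); note that Irr(H|1) is empty, so this gives V(H|1) = 1 automatically.\<close>
definition V_rel :: "('a, 'b) monoid_scheme \<Rightarrow> 'a set \<Rightarrow> 'a set" where
  "V_rel H M = generate H {h \<in> carrier H. \<exists>\<chi>\<in>Irr_rel H M. \<chi> h \<noteq> 0}"

text \<open>U(H|L): the product (= subgroup generated by the union) of all normal subgroups
  M of H with V(H|M) contained in L.\<close>
definition U_rel :: "('a, 'b) monoid_scheme \<Rightarrow> 'a set \<Rightarrow> 'a set" where
  "U_rel H L = generate H (\<Union>{M. M \<lhd> H \<and> V_rel H M \<subseteq> L})"

definition U_grp :: "('a, 'b) monoid_scheme \<Rightarrow> 'a set" where
  "U_grp H = U_rel H (group_center H)"

end

theory Submission
  imports Defs "Jordan_Normal_Form.Jordan_Normal_Form_Existence" "Jordan_Normal_Form.Spectral_Radius"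
begin

(* The center Z(chi) of an irreducible character chi consists of the elements represented by scalar
   matrices: a matrix of finite order whose trace has maximal modulus is scalar, and central elements
   act by scalars by Schur's lemma. Hence commutators [d, h] with d in Z(chi) lie in ker chi.

   If G is a nested GVZ-group, so is every quotient H = G/N. For H > 1 let M be the intersection of
   the kernels of the characters whose center is not contained in Z(H). Every chi with M not in
   ker chi then has Z(chi) <= Z(H) and vanishes outside Z(chi), so V(H|M) <= Z(H) and M <= U(H);
   and M > 1, since it contains [d, h] for any d in the smallest of those centers outside Z(H).

   Conversely, by downward induction on N the characters of G/N are GVZ and nested: for N < G pick
   M/N > 1 with V(G/N | M/N) <= Z(G/N). The characters of G/M are covered by induction, and every
   other character of G/N is nonzero only on Z(G/N), so its center is exactly Z(G/N), which lies in
   the center of every character of G/N. *)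

section \<open>Complex matrices of finite order\<close>

lemma jordan_block_pow_eq_oneD:
  assumes pow: "jordan_block m (a::complex) ^\<^sub>m k = 1\<^sub>m m" and k: "k > 0" and m: "m > 0"
  shows "m = 1 \<and> a ^ k = 1"
proof -
  have "(jordan_block m a ^\<^sub>m k) $$ (0,0) = 1" using pow m by simp
  hence ak: "a ^ k = 1" using m by (simp add: jordan_block_pow)
  have "m = 1"
  proof (rule ccontr)
    assume "m \<noteq> 1"
    with m have "1 < m" by simp
    with pow have "(jordan_block m a ^\<^sub>m k) $$ (0,1) = 0" by simp
    hence "of_nat k * a ^ (k - 1) = 0" using \<open>1 < m\<close> by (simp add: jordan_block_pow)
    hence "a = 0" using k by simp
    with k ak show False by (simp add: power_0_left)
  qed
  with ak show ?thesis by simp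
qed

lemma four_block_mat_eq_diagD:
  assumes "four_block_mat A B C D = four_block_mat A' B' C' D'"
    and "A \<in> carrier_mat m m" "A' \<in> carrier_mat m m" "D \<in> carrier_mat s s" "D' \<in> carrier_mat s s"
  shows "A = A' \<and> D = D'"
proof
  show "A = A'"
  proof (rule eq_matI)
    fix i j assume "i < dim_row A'" "j < dim_col A'"
    thus "A $$ (i,j) = A' $$ (i,j)"
      using arg_cong[OF assms(1), of "\<lambda>M. M $$ (i,j)"] assms(2-5) by auto
  qed (use assms in auto)
  show "D = D'"
  proof (rule eq_matI)
    fix i j assume "i < dim_row D'" "j < dim_col D'"
    thus "D $$ (i,j) = D' $$ (i,j)"
      using arg_cong[OF assms(1), of "\<lambda>M. M $$ (i+m,j+m)"] assms(2-5) by auto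
  qed (use assms in auto)
qed

lemma jordan_matrix_pow_eq_oneD:
  assumes "jordan_matrix n_as ^\<^sub>m k = 1\<^sub>m (sum_list (map fst n_as))"
    and "(m,a) \<in> set n_as"
  shows "jordan_block m (a::complex) ^\<^sub>m k = 1\<^sub>m m"
  using assms
proof (induction n_as)
  case Nil
  then show ?case by simp
next
  case (Cons na n_as)
  obtain m0 a0 where na: "na = (m0,a0)" by force
  let ?s = "sum_list (map fst n_as)"
  have "four_block_mat (jordan_block m0 a0 ^\<^sub>m k) (0\<^sub>m m0 ?s) (0\<^sub>m ?s m0) (jordan_matrix n_as ^\<^sub>m k)
      = jordan_matrix (na # n_as) ^\<^sub>m k"
    unfolding jordan_matrix_pow na
    by (simp add: Let_def jordan_matrix_pow[symmetric] dim_diag_block_mat o_def case_prod_beta)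
  also have "\<dots> = four_block_mat (1\<^sub>m m0) (0\<^sub>m m0 ?s) (0\<^sub>m ?s m0) (1\<^sub>m ?s)"
    using Cons.prems na by simp
  finally have "jordan_block m0 a0 ^\<^sub>m k = 1\<^sub>m m0 \<and> jordan_matrix n_as ^\<^sub>m k = 1\<^sub>m ?s"
    by (rule four_block_mat_eq_diagD) auto
  then show ?case using Cons na by auto
qed

lemma jordan_matrix_diagonal:
  assumes "\<forall>(m,a)\<in>set n_as. m = 1"
  shows "jordan_matrix n_as =
    mat (length n_as) (length n_as) (\<lambda>(i,j). if i = j then snd (n_as ! i) else (0::complex))"
  using assms
proof (induction n_as)
  case Nil
  then show ?case by (auto simp: jordan_matrix_def intro!: eq_matI)
next
  case (Cons na n_as)
  obtain m0 a0 where na: "na = (m0,a0)" by force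
  have m0: "m0 = 1" using Cons.prems na by auto
  have IH: "jordan_matrix n_as =
      mat (length n_as) (length n_as) (\<lambda>(i,j). if i = j then snd (n_as ! i) else 0)"
    using Cons by auto
  have s: "sum_list (map fst n_as) = length n_as"
    using Cons.prems by (induction n_as) auto
  show ?case unfolding na m0 jordan_matrix_Cons s IH
    by (rule eq_matI) (auto simp: jordan_block_def nth_Cons')
qed

lemma similar_mat_wit_pow_eq_one:
  assumes wit: "similar_mat_wit A J P Q" and A: "A \<in> carrier_mat n n" and pow: "A ^\<^sub>m k = 1\<^sub>m n"
  shows "J ^\<^sub>m k = 1\<^sub>m n"
proof -
  have dA: "dim_row A = n" using A by simp
  from wit have P: "P \<in> carrier_mat n n" and Q: "Q \<in> carrier_mat n n" and J: "J \<in> carrier_mat n n"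
    and QP: "Q * P = 1\<^sub>m n"
    unfolding similar_mat_wit_def Let_def dA by auto
  have Jk: "J ^\<^sub>m k \<in> carrier_mat n n" using J by simp
  have "J ^\<^sub>m k = (Q * P) * J ^\<^sub>m k * (Q * P)"
    using QP Jk by (simp add: left_mult_one_mat right_mult_one_mat)
  also have "\<dots> = Q * (P * J ^\<^sub>m k * Q) * P"
    using P Q Jk by (simp add: assoc_mult_mat[of _ n n _ n _ n])
  also have "\<dots> = Q * 1\<^sub>m n * P" by (simp only: similar_mat_wit_pow_id[OF wit, symmetric] pow)
  also have "\<dots> = 1\<^sub>m n" using QP Q by (simp add: right_mult_one_mat)
  finally show ?thesis .
qed

lemma finite_order_mat_diagonalizable:
  fixes A :: "complex mat"
  assumes A: "A \<in> carrier_mat n n" and k: "k > 0" and pow: "A ^\<^sub>m k = 1\<^sub>m n"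
  obtains P Q z where "P \<in> carrier_mat n n" "Q \<in> carrier_mat n n" "P * Q = 1\<^sub>m n" "Q * P = 1\<^sub>m n"
    "A = P * mat n n (\<lambda>(i,j). if i = j then z i else 0) * Q" "\<And>i. i < n \<Longrightarrow> z i ^ k = 1"
proof -
  obtain as where "char_poly A = (\<Prod>a\<leftarrow>as. [:- a, 1:])" using char_poly_factorized[OF A] by blast
  from jordan_nf_exists[OF A this] obtain n_as where jnf: "jordan_nf A n_as" by blast
  define J where "J = jordan_matrix n_as"
  from jnf have nz: "0 \<notin> fst ` set n_as" and "similar_mat A J" unfolding jordan_nf_def J_def by auto
  then obtain P Q where wit: "similar_mat_wit A J P Q" unfolding similar_mat_def by blast
  have dA: "dim_row A = n" using A by simp
  from wit have P: "P \<in> carrier_mat n n" and Q: "Q \<in> carrier_mat n n" and J: "J \<in> carrier_mat n n"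
    and PQ: "P * Q = 1\<^sub>m n" and QP: "Q * P = 1\<^sub>m n" and AJ: "A = P * J * Q"
    unfolding similar_mat_wit_def Let_def dA by auto
  have Jk1: "J ^\<^sub>m k = 1\<^sub>m n" using similar_mat_wit_pow_eq_one[OF wit A pow] .
  have sn: "sum_list (map fst n_as) = n"
    using J unfolding J_def by (metis carrier_matD(1) jordan_matrix_dim(1))
  have blocks: "m = 1 \<and> a ^ k = 1" if "(m,a) \<in> set n_as" for m a
  proof (rule jordan_block_pow_eq_oneD[OF _ k])
    show "jordan_block m a ^\<^sub>m k = 1\<^sub>m m"
      using jordan_matrix_pow_eq_oneD[of n_as k m a] Jk1 that sn unfolding J_def by simp
    show "m > 0" using nz that by (metis fst_conv gr0I image_eqI)
  qed
  hence ones: "\<forall>(m,a)\<in>set n_as. m = 1" by auto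
  have len: "length n_as = n" using ones sn by (induction n_as arbitrary: n) auto
  show thesis
  proof (rule that[OF P Q PQ QP])
    show "A = P * mat n n (\<lambda>(i,j). if i = j then snd (n_as ! i) else 0) * Q"
      using AJ jordan_matrix_diagonal[OF ones] len unfolding J_def by simp
    show "snd (n_as ! i) ^ k = 1" if "i < n" for i
      using blocks[of "fst (n_as ! i)" "snd (n_as ! i)"] that len by (simp add: nth_mem)
  qed
qed

lemma mtrace_mult_commute:
  assumes A: "A \<in> carrier_mat n m" and B: "B \<in> carrier_mat m n"
  shows "mtrace (A * B) = mtrace (B * A)"
proof -
  have "mtrace (A * B) = (\<Sum>i<n. \<Sum>j<m. A $$ (i,j) * B $$ (j,i))"
    unfolding mtrace_def using A B
    by (auto simp: scalar_prod_def atLeast0LessThan intro!: sum.cong)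
  also have "\<dots> = (\<Sum>j<m. \<Sum>i<n. B $$ (j,i) * A $$ (i,j))"
    by (subst sum.swap) (simp add: mult.commute)
  also have "\<dots> = mtrace (B * A)"
    unfolding mtrace_def using A B
    by (auto simp: scalar_prod_def atLeast0LessThan intro!: sum.cong)
  finally show ?thesis .
qed

lemma norm_sum_unit_eq_card_imp_const:
  fixes z :: "nat \<Rightarrow> complex"
  assumes z1: "\<And>i. i < n \<Longrightarrow> cmod (z i) = 1" and s: "cmod (\<Sum>i<n. z i) = real n"
    and i: "i < n"
  shows "z i = z 0"
proof -
  define S where "S = (\<Sum>i<n. z i)"
  define w where "w = cnj S / of_nat n"
  have "cmod (cnj S) = real n" using s unfolding S_def by (simp only: complex_mod_cnj)
  hence cw: "cmod w = 1" using i unfolding w_def by (simp add: norm_divide)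
  have le: "Re (w * z j) \<le> 1" if "j < n" for j
    using complex_Re_le_cmod[of "w * z j"] cw z1[OF that] by (simp add: norm_mult)
  \<comment> \<open>Rotating by \<open>w\<close> makes the sum real and equal to \<open>n\<close>, so every rotated summand is \<open>1\<close>.\<close>
  have "(\<Sum>j<n. Re (w * z j)) = Re (w * S)"
    unfolding S_def by (simp add: sum_distrib_left)
  also have "w * S = of_real ((cmod S)^2) / of_nat n"
    unfolding w_def using complex_norm_square[of S] by (simp add: mult.commute)
  also have "Re \<dots> = real n" using s i unfolding S_def by (simp add: power2_eq_square)
  finally have "(\<Sum>j<n. 1 - Re (w * z j)) = 0" by (simp add: sum_subtractf)
  hence re: "Re (w * z j) = 1" if "j < n" for j
    using sum_nonneg_eq_0_iff[of "{..<n}" "\<lambda>j. 1 - Re (w * z j)"] le that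
    by (simp del: times_complex.sel)
  have one: "w * z j = 1" if "j < n" for j
  proof -
    have "cmod (w * z j) = 1" using cw z1[OF that] by (simp add: norm_mult)
    hence "(Re (w * z j))^2 + (Im (w * z j))^2 = 1" by (metis cmod_power2 one_power2)
    hence "Im (w * z j) = 0" using re[OF that] by simp
    thus ?thesis using re[OF that] by (simp add: complex_eq_iff)
  qed
  have "w * z i = w * z 0" using one[OF i] one[of 0] i by simp
  moreover have "w \<noteq> 0" using cw by auto
  ultimately show "z i = z 0" by simp
qed

lemma pow_eq_one_trace_norm_imp_scalar:
  fixes A :: "complex mat"
  assumes A: "A \<in> carrier_mat n n" and k: "k > 0" and pow: "A ^\<^sub>m k = 1\<^sub>m n"
    and tr: "cmod (mtrace A) = real n"
  shows "\<exists>c. A = c \<cdot>\<^sub>m 1\<^sub>m n"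
proof -
  obtain P Q z where P: "P \<in> carrier_mat n n" and Q: "Q \<in> carrier_mat n n"
    and PQ: "P * Q = 1\<^sub>m n" and QP: "Q * P = 1\<^sub>m n"
    and AD: "A = P * mat n n (\<lambda>(i,j). if i = j then z i else 0) * Q"
    and zk: "\<And>i. i < n \<Longrightarrow> z i ^ k = 1"
    using finite_order_mat_diagonalizable[OF A k pow] by blast
  define D where "D = mat n n (\<lambda>(i,j). if i = j then z i else (0::complex))"
  have D: "D \<in> carrier_mat n n" unfolding D_def by simp
  have "mtrace A = mtrace (P * (D * Q))"
    using AD P D Q unfolding D_def[symmetric] by (simp add: assoc_mult_mat[of _ n n _ n _ n])
  also have "\<dots> = mtrace ((D * Q) * P)" using P D Q by (intro mtrace_mult_commute) auto
  also have "D * Q * P = D" using D Q P QP by (simp add: assoc_mult_mat[of _ n n _ n _ n])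
  also have "mtrace D = (\<Sum>i<n. z i)" unfolding mtrace_def D_def by simp
  finally have "cmod (\<Sum>i<n. z i) = real n" using tr by simp
  moreover have "cmod (z i) = 1" if "i < n" for i
    using power_eq_1_iff[OF zk[OF that]] k by simp
  ultimately have zz: "z i = z 0" if "i < n" for i
    using norm_sum_unit_eq_card_imp_const[of n z i] that by blast
  have "D = z 0 \<cdot>\<^sub>m 1\<^sub>m n"
  proof (rule eq_matI)
    fix i j assume "i < dim_row (z 0 \<cdot>\<^sub>m 1\<^sub>m n)" "j < dim_col (z 0 \<cdot>\<^sub>m 1\<^sub>m n)"
    thus "D $$ (i,j) = (z 0 \<cdot>\<^sub>m 1\<^sub>m n) $$ (i,j)" using zz[of i] unfolding D_def by auto
  qed (simp_all add: D_def)
  hence "A = P * (z 0 \<cdot>\<^sub>m 1\<^sub>m n) * Q" using AD unfolding D_def by simp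
  also have "\<dots> = z 0 \<cdot>\<^sub>m (P * Q)"
    using P Q by (simp add: mult_smult_distrib[OF P, of _ n] mult_smult_assoc_mat[OF P Q])
  finally show ?thesis using PQ by auto
qed

section \<open>Representations and characters\<close>

lemma is_repD:
  assumes "is_rep H n \<rho>"
  shows is_rep_dim_pos: "n > 0"
    and is_rep_carrier: "g \<in> carrier H \<Longrightarrow> \<rho> g \<in> carrier_mat n n"
    and is_rep_one: "\<rho> \<one>\<^bsub>H\<^esub> = 1\<^sub>m n"
    and is_rep_mult: "g \<in> carrier H \<Longrightarrow> h \<in> carrier H \<Longrightarrow> \<rho> (g \<otimes>\<^bsub>H\<^esub> h) = \<rho> g * \<rho> h"
  using assms unfolding is_rep_def by auto

lemma irreducible_rep_is_rep: "irreducible_rep H n \<rho> \<Longrightarrow> is_rep H n \<rho>"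
  unfolding irreducible_rep_def by simp

lemma is_rep_pow:
  assumes "monoid H" "is_rep H n \<rho>" "g \<in> carrier H"
  shows "\<rho> (g [^]\<^bsub>H\<^esub> (k::nat)) = \<rho> g ^\<^sub>m k"
proof (induction k)
  case 0
  then show ?case using assms(2) is_rep_carrier[OF assms(2,3)] by (simp add: is_rep_one)
next
  case (Suc k)
  interpret monoid H by fact
  show ?case using Suc assms(2,3) by (simp add: is_rep_mult)
qed

lemma is_rep_kernel_normal:
  fixes H (structure)
  assumes "group H" "is_rep H n \<rho>"
  shows "{g \<in> carrier H. \<rho> g = 1\<^sub>m n} \<lhd> H"
proof -
  interpret group H by fact
  note rep = is_repD[OF assms(2)]
  have inv: "\<rho> (inv a) = 1\<^sub>m n" if "a \<in> carrier H" "\<rho> a = 1\<^sub>m n" for a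
  proof -
    have "\<rho> (inv a) = \<rho> (inv a) * \<rho> a" using that rep(2)[of "inv a"] by simp
    also have "\<dots> = 1\<^sub>m n" using that rep(3) rep(4)[of "inv a" a] by simp
    finally show ?thesis .
  qed
  show ?thesis
  proof (rule normal_invI)
    show "subgroup {g \<in> carrier H. \<rho> g = 1\<^sub>m n} H"
      by (rule subgroupI) (use rep inv in auto)
  next
    fix x h assume x: "x \<in> carrier H" and h: "h \<in> {g \<in> carrier H. \<rho> g = 1\<^sub>m n}"
    have "\<rho> (x \<otimes> h \<otimes> inv x) = \<rho> x * \<rho> (inv x)"
      using x h rep(2)[of x] by (simp add: rep(4))
    also have "\<dots> = 1\<^sub>m n" using x rep(3) rep(4)[of x "inv x"] by simp
    finally show "x \<otimes> h \<otimes> inv x \<in> {g \<in> carrier H. \<rho> g = 1\<^sub>m n}" using x h by simp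
  qed
qed

lemma rep_norm_trace_eq_dim_iff_scalar:
  fixes H (structure)
  assumes "group H" "finite (carrier H)" "is_rep H n \<rho>" "g \<in> carrier H"
  shows "cmod (mtrace (\<rho> g)) = real n \<longleftrightarrow> (\<exists>c. \<rho> g = c \<cdot>\<^sub>m 1\<^sub>m n)"
proof -
  interpret group H by fact
  have k: "ord g > 0" using ord_ge_1[OF assms(2,4)] by simp
  have pow: "\<rho> g ^\<^sub>m ord g = 1\<^sub>m n"
    using is_rep_pow[OF monoid_axioms assms(3,4), of "ord g"] is_rep_one[OF assms(3)] assms(4) by simp
  show ?thesis
  proof
    assume "cmod (mtrace (\<rho> g)) = real n"
    thus "\<exists>c. \<rho> g = c \<cdot>\<^sub>m 1\<^sub>m n"
      using pow_eq_one_trace_norm_imp_scalar[OF is_rep_carrier[OF assms(3,4)] k pow] by blast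
  next
    assume "\<exists>c. \<rho> g = c \<cdot>\<^sub>m 1\<^sub>m n"
    then obtain c where c: "\<rho> g = c \<cdot>\<^sub>m 1\<^sub>m n" ..
    have "(c \<cdot>\<^sub>m 1\<^sub>m n) ^\<^sub>m j = c ^ j \<cdot>\<^sub>m 1\<^sub>m n" for j
      by (induction j) (auto intro!: eq_matI)
    hence "(c ^ ord g \<cdot>\<^sub>m 1\<^sub>m n) $$ (0,0) = (1\<^sub>m n :: complex mat) $$ (0,0)"
      using pow c by metis
    hence "c ^ ord g = 1" using is_rep_dim_pos[OF assms(3)] by simp
    hence "cmod c = 1" using power_eq_1_iff[of c "ord g"] k by simp
    thus "cmod (mtrace (\<rho> g)) = real n" using c by (simp add: mtrace_def norm_mult)
  qed
qed

lemma rep_eq_one_if_trace_eq_dim: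
  assumes "group H" "finite (carrier H)" "is_rep H n \<rho>" "g \<in> carrier H"
    and "mtrace (\<rho> g) = of_nat n"
  shows "\<rho> g = 1\<^sub>m n"
proof -
  obtain c where c: "\<rho> g = c \<cdot>\<^sub>m 1\<^sub>m n"
    using rep_norm_trace_eq_dim_iff_scalar[OF assms(1-4)] assms(5) by auto
  hence "c * of_nat n = of_nat n" using assms(5) by (simp add: mtrace_def)
  hence "c = 1" using is_rep_dim_pos[OF assms(3)] by simp
  thus ?thesis using c by (auto intro!: eq_matI)
qed

lemma eigenspace_is_subspace:
  assumes A: "A \<in> carrier_mat n n"
  shows "is_subspace n {w \<in> carrier_vec n. A *\<^sub>v w = c \<cdot>\<^sub>v w}"
  unfolding is_subspace_def
proof (intro conjI ballI allI)
  show "0\<^sub>v n \<in> {w \<in> carrier_vec n. A *\<^sub>v w = c \<cdot>\<^sub>v w}" using A by (auto intro!: eq_vecI)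
next
  fix v w assume "v \<in> {w \<in> carrier_vec n. A *\<^sub>v w = c \<cdot>\<^sub>v w}" "w \<in> {w \<in> carrier_vec n. A *\<^sub>v w = c \<cdot>\<^sub>v w}"
  thus "v + w \<in> {w \<in> carrier_vec n. A *\<^sub>v w = c \<cdot>\<^sub>v w}"
    by (auto simp: mult_add_distrib_mat_vec[OF A] smult_add_distrib_vec)
next
  fix a w assume "w \<in> {w \<in> carrier_vec n. A *\<^sub>v w = c \<cdot>\<^sub>v w}"
  thus "a \<cdot>\<^sub>v w \<in> {w \<in> carrier_vec n. A *\<^sub>v w = c \<cdot>\<^sub>v w}"
    by (auto simp: mult_mat_vec[OF A] smult_smult_assoc mult.commute)
qed auto

lemma scalar_mat_if_eigenspace_full:
  fixes A :: "complex mat"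
  assumes A: "A \<in> carrier_mat n n" and full: "\<And>w. w \<in> carrier_vec n \<Longrightarrow> A *\<^sub>v w = c \<cdot>\<^sub>v w"
  shows "A = c \<cdot>\<^sub>m 1\<^sub>m n"
proof (rule eq_matI)
  fix i j assume ij: "i < dim_row (c \<cdot>\<^sub>m 1\<^sub>m n)" "j < dim_col (c \<cdot>\<^sub>m 1\<^sub>m n)"
  hence "(A *\<^sub>v unit_vec n j) $ i = (c \<cdot>\<^sub>v unit_vec n j) $ i" using full by simp
  thus "A $$ (i,j) = (c \<cdot>\<^sub>m 1\<^sub>m n) $$ (i,j)" using ij A by (auto simp: mult_mat_vec_def)
qed (use A in auto)

lemma irreducible_rep_commuting_scalar:
  assumes irr: "irreducible_rep H n \<rho>" and Z: "Z \<in> carrier_mat n n"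
    and comm: "\<And>h. h \<in> carrier H \<Longrightarrow> Z * \<rho> h = \<rho> h * Z"
  shows "\<exists>c. Z = c \<cdot>\<^sub>m 1\<^sub>m n"
proof -
  note rep = is_repD[OF irreducible_rep_is_rep[OF irr]]
  obtain c where "eigenvalue Z c" using spectrum_non_empty[OF Z rep(1)] unfolding spectrum_def by auto
  then obtain v where v: "v \<in> carrier_vec n" "v \<noteq> 0\<^sub>v n" "Z *\<^sub>v v = c \<cdot>\<^sub>v v"
    using Z unfolding eigenvalue_def eigenvector_def by auto
  define W where "W = {w \<in> carrier_vec n. Z *\<^sub>v w = c \<cdot>\<^sub>v w}"
  have "\<rho> h *\<^sub>v w \<in> W" if h: "h \<in> carrier H" and w: "w \<in> W" for h w
  proof -
    have R: "\<rho> h \<in> carrier_mat n n" using rep(2)[OF h] .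
    have wc: "w \<in> carrier_vec n" and we: "Z *\<^sub>v w = c \<cdot>\<^sub>v w" using w unfolding W_def by auto
    have "Z *\<^sub>v (\<rho> h *\<^sub>v w) = (Z * \<rho> h) *\<^sub>v w" using Z R wc by simp
    also have "\<dots> = \<rho> h *\<^sub>v (Z *\<^sub>v w)" using comm[OF h] Z R wc by simp
    also have "\<dots> = c \<cdot>\<^sub>v (\<rho> h *\<^sub>v w)" using we mult_mat_vec[OF R wc] by simp
    finally show ?thesis unfolding W_def using R wc by auto
  qed
  with irr eigenspace_is_subspace[OF Z] have "W = {0\<^sub>v n} \<or> W = carrier_vec n"
    unfolding irreducible_rep_def W_def by blast
  moreover have "v \<in> W" using v unfolding W_def by auto
  ultimately have "W = carrier_vec n" using v by auto
  hence "Z = c \<cdot>\<^sub>m 1\<^sub>m n" using scalar_mat_if_eigenspace_full[OF Z] unfolding W_def by blast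
  thus ?thesis ..
qed

lemma IrrE:
  assumes "\<chi> \<in> Irr H"
  obtains n \<rho> where "irreducible_rep H n \<rho>" "\<chi> = (\<lambda>g\<in>carrier H. mtrace (\<rho> g))"
  using assms unfolding Irr_def by blast

lemma Irr_one_eq_dim:
  assumes "monoid H" "irreducible_rep H n \<rho>" "\<chi> = (\<lambda>g\<in>carrier H. mtrace (\<rho> g))"
  shows "\<chi> \<one>\<^bsub>H\<^esub> = of_nat n"
  using assms is_rep_one[OF irreducible_rep_is_rep[OF assms(2)]] monoid.one_closed[OF assms(1)]
  by (simp add: mtrace_def)

lemma char_ker_eq_rep_kernel:
  assumes "group H" "finite (carrier H)" "irreducible_rep H n \<rho>"
    and \<chi>: "\<chi> = (\<lambda>g\<in>carrier H. mtrace (\<rho> g))"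
  shows "char_ker H \<chi> = {g \<in> carrier H. \<rho> g = 1\<^sub>m n}"
proof -
  have one: "\<chi> \<one>\<^bsub>H\<^esub> = of_nat n" using Irr_one_eq_dim[OF group.is_monoid[OF assms(1)] assms(3) \<chi>] .
  have "\<chi> g = \<chi> \<one>\<^bsub>H\<^esub> \<longleftrightarrow> \<rho> g = 1\<^sub>m n" if g: "g \<in> carrier H" for g
  proof
    assume "\<chi> g = \<chi> \<one>\<^bsub>H\<^esub>"
    hence "mtrace (\<rho> g) = of_nat n" using one g unfolding \<chi> by simp
    thus "\<rho> g = 1\<^sub>m n"
      by (rule rep_eq_one_if_trace_eq_dim[OF assms(1,2) irreducible_rep_is_rep[OF assms(3)] g])
  qed (use one g in \<open>simp add: \<chi> mtrace_def\<close>)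
  thus ?thesis unfolding char_ker_def by blast
qed

lemma char_center_eq_rep_scalar:
  assumes "group H" "finite (carrier H)" "irreducible_rep H n \<rho>"
    and \<chi>: "\<chi> = (\<lambda>g\<in>carrier H. mtrace (\<rho> g))"
  shows "char_center H \<chi> = {g \<in> carrier H. \<exists>c. \<rho> g = c \<cdot>\<^sub>m 1\<^sub>m n}"
proof -
  have one: "\<chi> \<one>\<^bsub>H\<^esub> = of_nat n" using Irr_one_eq_dim[OF group.is_monoid[OF assms(1)] assms(3) \<chi>] .
  have "cmod (\<chi> g) = cmod (\<chi> \<one>\<^bsub>H\<^esub>) \<longleftrightarrow> (\<exists>c. \<rho> g = c \<cdot>\<^sub>m 1\<^sub>m n)" if g: "g \<in> carrier H" for g
  proof -
    have "\<chi> g = mtrace (\<rho> g)" using g by (simp add: \<chi>)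
    thus ?thesis
      using one rep_norm_trace_eq_dim_iff_scalar[OF assms(1,2) irreducible_rep_is_rep[OF assms(3)] g]
      by simp
  qed
  thus ?thesis unfolding char_center_def by blast
qed

lemma char_ker_normal:
  assumes "group H" "finite (carrier H)" "\<chi> \<in> Irr H"
  shows "char_ker H \<chi> \<lhd> H"
proof -
  obtain n \<rho> where "irreducible_rep H n \<rho>" "\<chi> = (\<lambda>g\<in>carrier H. mtrace (\<rho> g))"
    using assms(3) by (rule IrrE)
  thus ?thesis
    using char_ker_eq_rep_kernel[OF assms(1,2)] is_rep_kernel_normal[OF assms(1)] irreducible_rep_is_rep
    by metis
qed

lemma char_ker_subset_char_center: "char_ker H \<chi> \<subseteq> char_center H \<chi>"
  unfolding char_ker_def char_center_def by auto

lemma commutator_in_char_ker: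
  fixes H (structure)
  assumes "group H" "finite (carrier H)" "\<chi> \<in> Irr H" "d \<in> char_center H \<chi>" "h \<in> carrier H"
  shows "d \<otimes> h \<otimes> inv d \<otimes> inv h \<in> char_ker H \<chi>"
proof -
  interpret group H by fact
  obtain n \<rho> where irr: "irreducible_rep H n \<rho>" and \<chi>: "\<chi> = (\<lambda>g\<in>carrier H. mtrace (\<rho> g))"
    using assms(3) by (rule IrrE)
  note rep = is_repD[OF irreducible_rep_is_rep[OF irr]]
  obtain c where d: "d \<in> carrier H" and c: "\<rho> d = c \<cdot>\<^sub>m 1\<^sub>m n"
    using assms(4) unfolding char_center_eq_rep_scalar[OF assms(1,2) irr \<chi>] by auto
  have R: "\<rho> h \<in> carrier_mat n n" using rep(2)[OF assms(5)] .
  have "\<rho> (d \<otimes> h) = \<rho> (h \<otimes> d)"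
    using rep(4)[OF d assms(5)] rep(4)[OF assms(5) d] c R
    by (simp add: mult_smult_distrib[OF R, of _ n] mult_smult_assoc_mat[of _ n n _ n])
  hence "\<rho> (d \<otimes> h \<otimes> (inv d \<otimes> inv h)) = \<rho> (h \<otimes> d \<otimes> (inv d \<otimes> inv h))"
    using d assms(5) by (simp add: rep(4))
  also have "h \<otimes> d \<otimes> (inv d \<otimes> inv h) = \<one>"
    using d assms(5) by (simp add: m_assoc[symmetric] inv_mult_group[symmetric])
  finally show ?thesis
    unfolding char_ker_eq_rep_kernel[OF assms(1,2) irr \<chi>] using d assms(5) rep(3)
    by (simp add: m_assoc)
qed

lemma group_center_subset_char_center:
  fixes H (structure)
  assumes "group H" "finite (carrier H)" "\<chi> \<in> Irr H"
  shows "group_center H \<subseteq> char_center H \<chi>"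
proof
  interpret group H by fact
  fix z assume "z \<in> group_center H"
  hence z: "z \<in> carrier H" and zc: "\<And>g. g \<in> carrier H \<Longrightarrow> z \<otimes> g = g \<otimes> z"
    unfolding group_center_def by auto
  obtain n \<rho> where irr: "irreducible_rep H n \<rho>" and \<chi>: "\<chi> = (\<lambda>g\<in>carrier H. mtrace (\<rho> g))"
    using assms(3) by (rule IrrE)
  note rep = is_repD[OF irreducible_rep_is_rep[OF irr]]
  have "\<exists>c. \<rho> z = c \<cdot>\<^sub>m 1\<^sub>m n"
  proof (rule irreducible_rep_commuting_scalar[OF irr rep(2)[OF z]])
    fix h assume "h \<in> carrier H"
    thus "\<rho> z * \<rho> h = \<rho> h * \<rho> z" using rep(4) z zc by metis
  qed
  thus "z \<in> char_center H \<chi>" unfolding char_center_eq_rep_scalar[OF assms(1,2) irr \<chi>] using z by simp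
qed

lemma Irr_nonzero_on_char_center:
  assumes "monoid H" "\<chi> \<in> Irr H" "g \<in> char_center H \<chi>"
  shows "\<chi> g \<noteq> 0"
proof -
  obtain n \<rho> where irr: "irreducible_rep H n \<rho>" and \<chi>: "\<chi> = (\<lambda>g\<in>carrier H. mtrace (\<rho> g))"
    using assms(2) by (rule IrrE)
  show ?thesis
    using assms(3) Irr_one_eq_dim[OF assms(1) irr \<chi>] is_rep_dim_pos[OF irreducible_rep_is_rep[OF irr]]
    unfolding char_center_def by auto
qed

section \<open>Characters of quotient groups\<close>

lemma group_center_subgroup:
  fixes H (structure)
  assumes "group H"
  shows "subgroup (group_center H) H"
proof -
  interpret group H by fact
  show ?thesis
  proof (rule subgroupI)
    show "group_center H \<subseteq> carrier H" "group_center H \<noteq> {}"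
      unfolding group_center_def by force+
  next
    fix a assume "a \<in> group_center H"
    hence a: "a \<in> carrier H" and ca: "\<And>g. g \<in> carrier H \<Longrightarrow> a \<otimes> g = g \<otimes> a"
      unfolding group_center_def by auto
    have "inv a \<otimes> g = g \<otimes> inv a" if g: "g \<in> carrier H" for g
    proof -
      have "inv a \<otimes> g = inv a \<otimes> (g \<otimes> a) \<otimes> inv a" using a g by (simp add: m_assoc)
      also have "g \<otimes> a = a \<otimes> g" using ca[OF g] by (rule sym)
      also have "inv a \<otimes> (a \<otimes> g) \<otimes> inv a = g \<otimes> inv a" using a g by (simp add: m_assoc[symmetric])
      finally show ?thesis .
    qed
    thus "inv a \<in> group_center H" unfolding group_center_def using a by auto
  next
    fix a b assume "a \<in> group_center H" "b \<in> group_center H"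
    hence ab: "a \<in> carrier H" "b \<in> carrier H" and ca: "\<And>g. g \<in> carrier H \<Longrightarrow> a \<otimes> g = g \<otimes> a"
      and cb: "\<And>g. g \<in> carrier H \<Longrightarrow> b \<otimes> g = g \<otimes> b" unfolding group_center_def by auto
    have "a \<otimes> b \<otimes> g = g \<otimes> (a \<otimes> b)" if g: "g \<in> carrier H" for g
    proof -
      have "a \<otimes> b \<otimes> g = a \<otimes> (g \<otimes> b)" using ab g cb[OF g] by (simp add: m_assoc)
      also have "\<dots> = g \<otimes> a \<otimes> b" using ab g ca[OF g] by (simp add: m_assoc[symmetric])
      finally show ?thesis using ab g by (simp add: m_assoc)
    qed
    thus "a \<otimes> b \<in> group_center H" unfolding group_center_def using ab by auto
  qed
qed

lemma (in group) normal_Inter_carrier: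
  assumes "\<And>K. K \<in> \<K> \<Longrightarrow> K \<lhd> G"
  shows "carrier G \<inter> \<Inter>\<K> \<lhd> G"
proof (rule normal_invI)
  have sub: "subgroup K G" if "K \<in> \<K>" for K using assms[OF that] by (rule normal_imp_subgroup)
  show "subgroup (carrier G \<inter> \<Inter>\<K>) G"
  proof (rule subgroupI)
    show "carrier G \<inter> \<Inter>\<K> \<noteq> {}" using sub subgroup.one_closed by blast
  qed (auto intro: subgroup.m_closed subgroup.m_inv_closed sub)
next
  fix x h assume "x \<in> carrier G" "h \<in> carrier G \<inter> \<Inter>\<K>"
  thus "x \<otimes> h \<otimes> inv x \<in> carrier G \<inter> \<Inter>\<K>" using assms normal.inv_op_closed2 by fastforce
qed

lemma is_rep_comp_hom:
  assumes "group_hom G H h" "is_rep H n \<sigma>"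
  shows "is_rep G n (\<sigma> \<circ> h)"
proof -
  interpret group_hom G H h by fact
  note rep = is_repD[OF assms(2)]
  show ?thesis
    unfolding is_rep_def
  proof (intro conjI ballI)
    fix g g' assume "g \<in> carrier G" "g' \<in> carrier G"
    thus "(\<sigma> \<circ> h) (g \<otimes>\<^bsub>G\<^esub> g') = (\<sigma> \<circ> h) g * (\<sigma> \<circ> h) g'" using rep(4) by simp
  qed (use rep in auto)
qed

lemma irreducible_rep_if_same_image:
  assumes irr: "irreducible_rep H n \<sigma>" and rep: "is_rep G n \<rho>"
    and img: "\<rho> ` carrier G = \<sigma> ` carrier H"
  shows "irreducible_rep G n \<rho>"
  unfolding irreducible_rep_def
proof (intro conjI allI impI rep)
  fix W assume W: "is_subspace n W \<and> (\<forall>g\<in>carrier G. \<forall>w\<in>W. \<rho> g *\<^sub>v w \<in> W)"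
  have "\<sigma> C *\<^sub>v w \<in> W" if "C \<in> carrier H" "w \<in> W" for C w
  proof -
    have "\<sigma> C \<in> \<rho> ` carrier G" using img that(1) by simp
    then obtain g where "g \<in> carrier G" "\<sigma> C = \<rho> g" by blast
    thus ?thesis using W that(2) by simp
  qed
  thus "W = {0\<^sub>v n} \<or> W = carrier_vec n" using irr W unfolding irreducible_rep_def by blast
qed

lemma Irr_comp_surj_hom:
  assumes hom: "group_hom G H h" and surj: "h ` carrier G = carrier H" and "\<psi> \<in> Irr H"
  shows "(\<lambda>g\<in>carrier G. \<psi> (h g)) \<in> Irr G"
proof -
  obtain n \<sigma> where irr: "irreducible_rep H n \<sigma>" and \<psi>: "\<psi> = (\<lambda>C\<in>carrier H. mtrace (\<sigma> C))"
    using assms(3) by (rule IrrE)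
  have rep: "is_rep G n (\<sigma> \<circ> h)" using is_rep_comp_hom[OF hom irreducible_rep_is_rep[OF irr]] .
  have "irreducible_rep G n (\<sigma> \<circ> h)"
    by (rule irreducible_rep_if_same_image[OF irr rep]) (metis surj image_comp)
  moreover have "(\<lambda>g\<in>carrier G. \<psi> (h g)) = (\<lambda>g\<in>carrier G. mtrace ((\<sigma> \<circ> h) g))"
    using surj unfolding \<psi> by (intro restrict_ext) auto
  ultimately show ?thesis unfolding Irr_def by blast
qed

lemma Irr_FactGroup_inflate:
  assumes "N \<lhd> G" "\<psi> \<in> Irr (G Mod N)"
  shows "(\<lambda>g\<in>carrier G. \<psi> (N #>\<^bsub>G\<^esub> g)) \<in> Irr G"
proof (rule Irr_comp_surj_hom[OF _ _ assms(2)])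
  interpret normal N G by fact
  show "group_hom G (G Mod N) (\<lambda>g. N #>\<^bsub>G\<^esub> g)"
    by (intro group_hom.intro group_hom_axioms.intro is_group factorgroup_is_group r_coset_hom_Mod)
  show "(\<lambda>g. N #>\<^bsub>G\<^esub> g) ` carrier G = carrier (G Mod N)" by (simp add: carrier_FactGroup)
qed

lemma is_rep_FactGroup_factor:
  fixes G (structure)
  assumes "N \<lhd> G" "is_rep G n \<rho>" "\<And>m. m \<in> N \<Longrightarrow> \<rho> m = 1\<^sub>m n"
  obtains \<sigma> where "is_rep (G Mod N) n \<sigma>" "\<And>g. g \<in> carrier G \<Longrightarrow> \<rho> g = \<sigma> (N #> g)"
proof -
  interpret N: normal N G by fact
  note rep = is_repD[OF assms(2)]
  have "\<rho> g = \<rho> g'" if g: "g \<in> carrier G" and g': "g' \<in> carrier G" and eq: "N #> g = N #> g'" for g g'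
  proof -
    have "g' \<in> N #> g" using eq N.rcos_self[OF g' N.subgroup_axioms] by simp
    then obtain m where m: "m \<in> N" "g' = m \<otimes> g" unfolding r_coset_def by auto
    hence "\<rho> g' = \<rho> m * \<rho> g" using rep(4) N.subset g by auto
    thus ?thesis using assms(3)[OF m(1)] rep(2)[OF g] by simp
  qed
  then obtain \<sigma> where \<sigma>: "\<And>g. g \<in> carrier G \<Longrightarrow> \<rho> g = \<sigma> (N #> g)"
    using function_factors_left_gen[of "\<lambda>g. g \<in> carrier G" "\<lambda>g. N #> g" \<rho>] by blast
  have "is_rep (G Mod N) n \<sigma>"
    unfolding is_rep_def carrier_FactGroup
  proof (intro conjI ballI)
    show "n > 0" by (rule rep(1))
  next
    fix C assume "C \<in> (\<lambda>g. N #> g) ` carrier G"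
    then obtain g where "g \<in> carrier G" "C = N #> g" by blast
    thus "\<sigma> C \<in> carrier_mat n n" using \<sigma> rep(2) by metis
  next
    show "\<sigma> \<one>\<^bsub>G Mod N\<^esub> = 1\<^sub>m n" using \<sigma>[OF N.one_closed] rep(3) N.subset by simp
  next
    fix C D assume "C \<in> (\<lambda>g. N #> g) ` carrier G" "D \<in> (\<lambda>g. N #> g) ` carrier G"
    then obtain a b where a: "a \<in> carrier G" "C = N #> a" and b: "b \<in> carrier G" "D = N #> b" by blast
    thus "\<sigma> (C \<otimes>\<^bsub>G Mod N\<^esub> D) = \<sigma> C * \<sigma> D"
      using N.rcos_sum[OF a(1) b(1)] \<sigma> rep(4)[OF a(1) b(1)] by simp
  qed
  thus thesis using \<sigma> by (rule that)
qed

lemma Irr_FactGroup_deflate: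
  fixes G (structure)
  assumes "group G" "finite (carrier G)" "N \<lhd> G" "\<chi> \<in> Irr G" "N \<subseteq> char_ker G \<chi>"
  obtains \<psi> where "\<psi> \<in> Irr (G Mod N)" "\<chi> = (\<lambda>g\<in>carrier G. \<psi> (N #> g))"
proof -
  obtain n \<rho> where irr: "irreducible_rep G n \<rho>" and \<chi>: "\<chi> = (\<lambda>g\<in>carrier G. mtrace (\<rho> g))"
    using assms(4) by (rule IrrE)
  have "\<rho> m = 1\<^sub>m n" if "m \<in> N" for m
    using assms(5) that char_ker_eq_rep_kernel[OF assms(1,2) irr \<chi>] by auto
  then obtain \<sigma> where rep: "is_rep (G Mod N) n \<sigma>" and \<sigma>: "\<And>g. g \<in> carrier G \<Longrightarrow> \<rho> g = \<sigma> (N #> g)"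
    using is_rep_FactGroup_factor[OF assms(3) irreducible_rep_is_rep[OF irr]] by blast
  have "irreducible_rep (G Mod N) n \<sigma>"
  proof (rule irreducible_rep_if_same_image[OF irr rep])
    show "\<sigma> ` carrier (G Mod N) = \<rho> ` carrier G"
      unfolding carrier_FactGroup image_image by (rule image_cong) (simp_all add: \<sigma>)
  qed
  hence "(\<lambda>C\<in>carrier (G Mod N). mtrace (\<sigma> C)) \<in> Irr (G Mod N)" unfolding Irr_def by blast
  moreover have "\<chi> = (\<lambda>g\<in>carrier G. (\<lambda>C\<in>carrier (G Mod N). mtrace (\<sigma> C)) (N #> g))"
    unfolding \<chi> by (intro restrict_ext) (simp add: carrier_FactGroup \<sigma>)
  ultimately show thesis by (rule that)
qed

lemma char_center_inflate_iff:
  fixes G (structure)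
  assumes "N \<lhd> G" "g \<in> carrier G"
  shows "g \<in> char_center G (\<lambda>g\<in>carrier G. \<psi> (N #> g)) \<longleftrightarrow> N #> g \<in> char_center (G Mod N) \<psi>"
proof -
  interpret normal N G by fact
  show ?thesis using assms(2) subset unfolding char_center_def carrier_FactGroup by auto
qed

lemma char_center_FactGroup:
  fixes G (structure)
  assumes "N \<lhd> G"
  shows "char_center (G Mod N) \<psi> = (\<lambda>g. N #> g) ` char_center G (\<lambda>g\<in>carrier G. \<psi> (N #> g))"
proof (intro equalityI subsetI)
  fix C assume C: "C \<in> char_center (G Mod N) \<psi>"
  then obtain g where g: "g \<in> carrier G" "C = N #> g" unfolding char_center_def carrier_FactGroup by auto
  thus "C \<in> (\<lambda>g. N #> g) ` char_center G (\<lambda>g\<in>carrier G. \<psi> (N #> g))"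
    using C char_center_inflate_iff[OF assms g(1)] by auto
next
  fix C assume "C \<in> (\<lambda>g. N #> g) ` char_center G (\<lambda>g\<in>carrier G. \<psi> (N #> g))"
  then obtain g where g: "g \<in> char_center G (\<lambda>g\<in>carrier G. \<psi> (N #> g))" "C = N #> g" by auto
  moreover have "g \<in> carrier G" using g(1) unfolding char_center_def by auto
  ultimately show "C \<in> char_center (G Mod N) \<psi>" using char_center_inflate_iff[OF assms] by auto
qed

section \<open>Nested GVZ-groups\<close>

definition Irr_mod :: "('a, 'b) monoid_scheme \<Rightarrow> 'a set \<Rightarrow> ('a \<Rightarrow> complex) set" where
  "Irr_mod G N = {\<chi> \<in> Irr G. N \<subseteq> char_ker G \<chi>}"

definition nested_GVZ_on :: "('a, 'b) monoid_scheme \<Rightarrow> ('a \<Rightarrow> complex) set \<Rightarrow> bool" where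
  "nested_GVZ_on G A \<longleftrightarrow> (\<forall>\<chi>\<in>A. \<forall>g\<in>carrier G - char_center G \<chi>. \<chi> g = 0) \<and>
     (\<forall>\<chi>\<in>A. \<forall>\<psi>\<in>A. char_center G \<chi> \<subseteq> char_center G \<psi> \<or> char_center G \<psi> \<subseteq> char_center G \<chi>)"

lemma nested_GVZ_on_Irr_iff: "nested_GVZ_on G (Irr G) \<longleftrightarrow> nested_group G \<and> GVZ_group G"
  unfolding nested_GVZ_on_def nested_group_def GVZ_group_def by blast

lemma nested_GVZ_on_subset: "nested_GVZ_on G B \<Longrightarrow> A \<subseteq> B \<Longrightarrow> nested_GVZ_on G A"
  unfolding nested_GVZ_on_def by blast

lemma nested_GVZ_on_Un_constant_center:
  assumes "nested_GVZ_on G A"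
    and "\<And>\<chi>. \<chi> \<in> B \<Longrightarrow> char_center G \<chi> = Z \<and> (\<forall>g\<in>carrier G - Z. \<chi> g = 0)"
    and "\<And>\<chi>. \<chi> \<in> A \<Longrightarrow> Z \<subseteq> char_center G \<chi>"
  shows "nested_GVZ_on G (A \<union> B)"
  using assms unfolding nested_GVZ_on_def by (metis Un_iff order_refl)

lemma nested_GVZ_on_FactGroup:
  fixes G (structure)
  assumes "N \<lhd> G" "nested_GVZ_on G (Irr G)"
  shows "nested_GVZ_on (G Mod N) (Irr (G Mod N))"
  unfolding nested_GVZ_on_def
proof (intro conjI ballI)
  fix \<psi> C assume \<psi>: "\<psi> \<in> Irr (G Mod N)" and C: "C \<in> carrier (G Mod N) - char_center (G Mod N) \<psi>"
  then obtain g where g: "g \<in> carrier G" "C = N #> g" unfolding carrier_FactGroup by blast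
  hence "g \<notin> char_center G (\<lambda>g\<in>carrier G. \<psi> (N #> g))"
    using C char_center_inflate_iff[OF assms(1)] by blast
  hence "(\<lambda>g\<in>carrier G. \<psi> (N #> g)) g = 0"
    using assms(2) Irr_FactGroup_inflate[OF assms(1) \<psi>] g(1) unfolding nested_GVZ_on_def by blast
  thus "\<psi> C = 0" using g by simp
next
  fix \<psi> \<phi> assume "\<psi> \<in> Irr (G Mod N)" "\<phi> \<in> Irr (G Mod N)"
  hence "char_center G (\<lambda>g\<in>carrier G. \<psi> (N #> g)) \<subseteq> char_center G (\<lambda>g\<in>carrier G. \<phi> (N #> g)) \<or>
      char_center G (\<lambda>g\<in>carrier G. \<phi> (N #> g)) \<subseteq> char_center G (\<lambda>g\<in>carrier G. \<psi> (N #> g))"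
    using assms(2) Irr_FactGroup_inflate[OF assms(1)] unfolding nested_GVZ_on_def by blast
  thus "char_center (G Mod N) \<psi> \<subseteq> char_center (G Mod N) \<phi> \<or>
      char_center (G Mod N) \<phi> \<subseteq> char_center (G Mod N) \<psi>"
    unfolding char_center_FactGroup[OF assms(1)] by (auto intro: image_mono)
qed

lemma finite_chain_has_least:
  assumes "finite A" "S \<noteq> {}" "\<And>x. x \<in> S \<Longrightarrow> f x \<subseteq> A"
    and chain: "\<And>x y. x \<in> S \<Longrightarrow> y \<in> S \<Longrightarrow> f x \<subseteq> f y \<or> f y \<subseteq> f x"
  obtains x0 where "x0 \<in> S" "\<And>y. y \<in> S \<Longrightarrow> f x0 \<subseteq> f y"
proof -
  obtain x0 where x0: "x0 \<in> S" and min: "\<And>y. y \<in> S \<Longrightarrow> card (f x0) \<le> card (f y)"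
    using ex_has_least_nat[of "\<lambda>x. x \<in> S" _ "\<lambda>x. card (f x)"] assms(2) by blast
  have "f x0 \<subseteq> f y" if y: "y \<in> S" for y
  proof (rule ccontr)
    assume "\<not> f x0 \<subseteq> f y"
    hence "f y \<subset> f x0" using chain[OF x0 y] by blast
    hence "card (f y) < card (f x0)" using psubset_card_mono finite_subset assms(1,3) x0 by metis
    thus False using min[OF y] by simp
  qed
  with x0 show thesis by (rule that)
qed

lemma V_rel_subset_center_if_GVZ:
  fixes H (structure)
  assumes "group H" "GVZ_group H"
    and central: "\<And>\<chi>. \<chi> \<in> Irr H \<Longrightarrow> \<not> M \<subseteq> char_ker H \<chi> \<Longrightarrow> char_center H \<chi> \<subseteq> group_center H"
  shows "V_rel H M \<subseteq> group_center H"
  unfolding V_rel_def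
proof (rule group.generate_subgroup_incl[OF assms(1) _ group_center_subgroup[OF assms(1)]], rule subsetI)
  fix h assume "h \<in> {h \<in> carrier H. \<exists>\<chi>\<in>Irr_rel H M. \<chi> h \<noteq> 0}"
  then obtain \<chi> where h: "h \<in> carrier H" and \<chi>: "\<chi> \<in> Irr H" "\<not> M \<subseteq> char_ker H \<chi>" "\<chi> h \<noteq> 0"
    unfolding Irr_rel_def by auto
  have "h \<in> char_center H \<chi>" using assms(2) \<chi>(1,3) h unfolding GVZ_group_def by blast
  thus "h \<in> group_center H" using central[OF \<chi>(1,2)] by blast
qed

lemma Inter_char_ker_noncentral_nontrivial:
  fixes H (structure)
  assumes grp: "group H" and fin: "finite (carrier H)" and nest: "nested_group H"
    and S: "S \<subseteq> Irr H" "S \<noteq> {}" "\<And>\<psi>. \<psi> \<in> S \<Longrightarrow> \<not> char_center H \<psi> \<subseteq> group_center H"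
  shows "\<exists>x\<in>carrier H \<inter> \<Inter>(char_ker H ` S). x \<noteq> \<one>"
proof -
  interpret group H by fact
  have "char_center H \<psi> \<subseteq> carrier H" for \<psi> unfolding char_center_def by auto
  moreover have "char_center H \<psi> \<subseteq> char_center H \<phi> \<or> char_center H \<phi> \<subseteq> char_center H \<psi>"
    if "\<psi> \<in> S" "\<phi> \<in> S" for \<psi> \<phi> using nest S(1) that unfolding nested_group_def by blast
  ultimately obtain \<psi>0 where \<psi>0: "\<psi>0 \<in> S" and least: "\<And>\<psi>. \<psi> \<in> S \<Longrightarrow> char_center H \<psi>0 \<subseteq> char_center H \<psi>"
    using finite_chain_has_least[OF fin S(2), of "char_center H"] by blast
  then obtain d where d: "d \<in> char_center H \<psi>0" "d \<notin> group_center H" using S(3) by blast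
  hence dc: "d \<in> carrier H" unfolding char_center_def by auto
  then obtain h where h: "h \<in> carrier H" "d \<otimes> h \<noteq> h \<otimes> d" using d(2) unfolding group_center_def by auto
  define x where "x = d \<otimes> h \<otimes> inv d \<otimes> inv h"
  have "x \<noteq> \<one>"
  proof
    assume "x = \<one>"
    have "d \<otimes> h = x \<otimes> h \<otimes> d" using dc h(1) unfolding x_def by (simp add: m_assoc)
    also have "\<dots> = h \<otimes> d" using \<open>x = \<one>\<close> dc h(1) by simp
    finally show False using h(2) by contradiction
  qed
  \<comment> \<open>\<open>d\<close> lies in the least, hence in every, center of \<open>S\<close>.\<close>
  moreover have "x \<in> char_ker H \<psi>" if "\<psi> \<in> S" for \<psi>
    using commutator_in_char_ker[OF grp fin _ _ h(1)] d(1) least[OF that] S(1) that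
    unfolding x_def by blast
  ultimately show ?thesis using dc h(1) unfolding x_def by auto
qed

lemma U_grp_nontrivial_if_nested_GVZ:
  fixes H (structure)
  assumes grp: "group H" and fin: "finite (carrier H)" and nontriv: "carrier H \<noteq> {\<one>}"
    and "nested_group H" "GVZ_group H"
  shows "U_grp H \<noteq> {\<one>}"
proof -
  interpret group H by fact
  define S where "S = {\<psi> \<in> Irr H. \<not> char_center H \<psi> \<subseteq> group_center H}"
  define M where "M = carrier H \<inter> \<Inter>(char_ker H ` S)"
  have M: "M \<lhd> H" unfolding M_def S_def by (rule normal_Inter_carrier) (auto intro: char_ker_normal[OF grp fin])
  have "V_rel H M \<subseteq> group_center H"
    by (rule V_rel_subset_center_if_GVZ[OF grp assms(5)]) (auto simp: M_def S_def)
  hence "M \<subseteq> U_grp H" unfolding U_grp_def U_rel_def using M by (auto intro: generate.incl)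
  moreover have "\<exists>x\<in>M. x \<noteq> \<one>"
  proof (cases "S = {}")
    case True
    hence "M = carrier H" unfolding M_def by auto
    thus ?thesis using nontriv one_closed by blast
  next
    case False
    thus ?thesis
      using Inter_char_ker_noncentral_nontrivial[OF grp fin assms(4), of S] unfolding M_def S_def by blast
  qed
  ultimately show ?thesis by blast
qed

lemma U_grp_FactGroup_nontrivial_if_nested_GVZ:
  assumes "group G" "finite (carrier G)" "nested_group G" "GVZ_group G" "N \<lhd> G" "N \<noteq> carrier G"
  shows "U_grp (G Mod N) \<noteq> {\<one>\<^bsub>G Mod N\<^esub>}"
proof (rule U_grp_nontrivial_if_nested_GVZ)
  show "group (G Mod N)" using assms(5) by (rule normal.factorgroup_is_group)
  show "finite (carrier (G Mod N))" using assms(2) by (simp add: carrier_FactGroup)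
  show "carrier (G Mod N) \<noteq> {\<one>\<^bsub>G Mod N\<^esub>}"
    using normal.fact_group_trivial_iff[OF assms(5,2)] assms(6) by blast
  have "nested_GVZ_on (G Mod N) (Irr (G Mod N))"
    using nested_GVZ_on_FactGroup[OF assms(5)] assms(3,4) by (simp add: nested_GVZ_on_Irr_iff)
  thus "nested_group (G Mod N)" "GVZ_group (G Mod N)" by (simp_all add: nested_GVZ_on_Irr_iff)
qed

lemma U_grp_nontrivialE:
  fixes H (structure)
  assumes "group H" "U_grp H \<noteq> {\<one>}"
  obtains M where "M \<lhd> H" "V_rel H M \<subseteq> group_center H" "M \<noteq> {\<one>}"
proof -
  interpret group H by fact
  have "\<exists>M. M \<lhd> H \<and> V_rel H M \<subseteq> group_center H \<and> M \<noteq> {\<one>}"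
  proof (rule ccontr)
    assume "\<not> ?thesis"
    hence "\<Union>{M. M \<lhd> H \<and> V_rel H M \<subseteq> group_center H} \<subseteq> {\<one>}" by blast
    hence "U_grp H \<subseteq> {\<one>}" unfolding U_grp_def U_rel_def
      by (rule generate_subgroup_incl[OF _ triv_subgroup])
    moreover have "\<one> \<in> U_grp H" unfolding U_grp_def U_rel_def by (rule generate.one)
    ultimately show False using assms(2) by blast
  qed
  thus thesis using that by blast
qed

lemma (in normal) FactGroup_subgroup_Union_psubset:
  assumes "subgroup A (G Mod H)" "A \<noteq> {H}"
  shows "H \<subset> \<Union>A"
proof -
  have "H \<in> A" using subgroup.one_closed[OF assms(1)] by simp
  with assms(2) obtain C where C: "C \<in> A" "C \<noteq> H" by blast
  then obtain g where g: "g \<in> carrier G" "C = H #> g"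
    using subgroup.subset[OF assms(1)] unfolding carrier_FactGroup by blast
  have "g \<in> \<Union>A" using C g rcos_self[OF g(1) subgroup_axioms] by blast
  moreover have "g \<notin> H" using C(2) g coset_join2[OF g(1) subgroup_axioms] by blast
  ultimately show ?thesis using \<open>H \<in> A\<close> by blast
qed

lemma Irr_rel_central_support:
  fixes H (structure)
  assumes "group H" "finite (carrier H)" "V_rel H M \<subseteq> group_center H" "\<psi> \<in> Irr_rel H M"
  shows "char_center H \<psi> = group_center H \<and> (\<forall>h\<in>carrier H - group_center H. \<psi> h = 0)"
proof -
  have \<psi>: "\<psi> \<in> Irr H" using assms(4) unfolding Irr_rel_def by simp
  have supp: "h \<in> group_center H" if "h \<in> carrier H" "\<psi> h \<noteq> 0" for h
    using that assms(3,4) unfolding V_rel_def by (blast intro: generate.incl)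
  have "char_center H \<psi> \<subseteq> group_center H"
  proof
    fix g assume g: "g \<in> char_center H \<psi>"
    thus "g \<in> group_center H"
      using supp Irr_nonzero_on_char_center[OF group.is_monoid[OF assms(1)] \<psi> g]
      unfolding char_center_def by blast
  qed
  thus ?thesis using group_center_subset_char_center[OF assms(1,2) \<psi>] supp by blast
qed

lemma Irr_mod_center_preimage_subset_char_center:
  fixes G (structure)
  assumes "group G" "finite (carrier G)" "N \<lhd> G" "\<chi> \<in> Irr_mod G N"
  shows "{g \<in> carrier G. N #> g \<in> group_center (G Mod N)} \<subseteq> char_center G \<chi>"
proof -
  interpret N: normal N G by fact
  have "\<chi> \<in> Irr G" "N \<subseteq> char_ker G \<chi>" using assms(4) unfolding Irr_mod_def by auto
  then obtain \<psi> where \<psi>: "\<psi> \<in> Irr (G Mod N)" "\<chi> = (\<lambda>g\<in>carrier G. \<psi> (N #> g))"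
    by (rule Irr_FactGroup_deflate[OF assms(1-3)])
  have "finite (carrier (G Mod N))" using assms(2) by (simp add: carrier_FactGroup)
  thus ?thesis
    using group_center_subset_char_center[OF N.factorgroup_is_group _ \<psi>(1)] char_center_inflate_iff[OF assms(3)]
    unfolding \<psi>(2) by blast
qed

lemma Irr_mod_char_center_eq_center_preimage:
  fixes G (structure)
  assumes "group G" "finite (carrier G)" "N \<lhd> G" "subgroup Mb (G Mod N)"
    and V: "V_rel (G Mod N) Mb \<subseteq> group_center (G Mod N)"
    and "\<chi> \<in> Irr_mod G N" "\<not> \<Union>Mb \<subseteq> char_ker G \<chi>"
  shows "char_center G \<chi> = {g \<in> carrier G. N #> g \<in> group_center (G Mod N)} \<and>
    (\<forall>g\<in>carrier G - char_center G \<chi>. \<chi> g = 0)"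
proof -
  interpret N: normal N G by fact
  have "\<chi> \<in> Irr G" "N \<subseteq> char_ker G \<chi>" using assms(6) unfolding Irr_mod_def by auto
  then obtain \<psi> where \<psi>: "\<psi> \<in> Irr (G Mod N)" and \<chi>: "\<chi> = (\<lambda>g\<in>carrier G. \<psi> (N #> g))"
    by (rule Irr_FactGroup_deflate[OF assms(1-3)])
  obtain x where x: "x \<in> carrier G" "N #> x \<in> Mb" "x \<notin> char_ker G \<chi>"
    using assms(7) N.factgroup_subgroup_union_char[OF assms(4)] by auto
  have "\<psi> (N #> x) \<noteq> \<psi> \<one>\<^bsub>G Mod N\<^esub>" using x(1,3) N.subset unfolding char_ker_def \<chi> by auto
  hence "\<psi> \<in> Irr_rel (G Mod N) Mb" using \<psi> x(2) unfolding Irr_rel_def char_ker_def by auto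
  moreover have "finite (carrier (G Mod N))" using assms(2) by (simp add: carrier_FactGroup)
  ultimately have ctr: "char_center (G Mod N) \<psi> = group_center (G Mod N)"
    and van: "\<forall>C\<in>carrier (G Mod N) - group_center (G Mod N). \<psi> C = 0"
    using Irr_rel_central_support[OF N.factorgroup_is_group _ V] by auto
  have "char_center G \<chi> = {g \<in> carrier G. N #> g \<in> group_center (G Mod N)}"
    using char_center_inflate_iff[OF assms(3)] unfolding \<chi> ctr[symmetric] char_center_def by auto
  thus ?thesis using van unfolding \<chi> by (auto simp: carrier_FactGroup)
qed

lemma nested_GVZ_on_Irr_mod_carrier: "nested_GVZ_on G (Irr_mod G (carrier G))"
proof -
  have "char_center G \<chi> = carrier G" if "\<chi> \<in> Irr_mod G (carrier G)" for \<chi>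
    using that char_ker_subset_char_center[of G \<chi>] unfolding Irr_mod_def char_center_def by auto
  thus ?thesis unfolding nested_GVZ_on_def by auto
qed

lemma nested_GVZ_on_Irr_mod:
  fixes G (structure)
  assumes grp: "group G" and fin: "finite (carrier G)"
    and U: "\<forall>N. N \<lhd> G \<and> N \<noteq> carrier G \<longrightarrow> U_grp (G Mod N) \<noteq> {\<one>\<^bsub>G Mod N\<^esub>}"
  shows "N \<lhd> G \<Longrightarrow> nested_GVZ_on G (Irr_mod G N)"
proof (induction "card (carrier G) - card N" arbitrary: N rule: less_induct)
  case less
  interpret N: normal N G by fact
  show ?case
  proof (cases "N = carrier G")
    case True
    thus ?thesis by (simp add: nested_GVZ_on_Irr_mod_carrier)
  next
    case False
    let ?Z = "{g \<in> carrier G. N #> g \<in> group_center (G Mod N)}"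
    obtain Mb where Mb: "Mb \<lhd> G Mod N" "V_rel (G Mod N) Mb \<subseteq> group_center (G Mod N)" "Mb \<noteq> {N}"
      using U_grp_nontrivialE[OF N.factorgroup_is_group] U less.prems False by (metis one_FactGroup)
    have sub: "subgroup Mb (G Mod N)" using Mb(1) by (rule normal_imp_subgroup)
    \<comment> \<open>\<open>\<Union>Mb\<close> is the preimage of \<open>Mb\<close> in \<open>G\<close>.\<close>
    have M: "\<Union>Mb \<lhd> G" using N.factgroup_subgroup_union_normal[OF Mb(1)] .
    have "\<Union>Mb \<subseteq> carrier G" using normal_imp_subgroup[OF M] by (rule subgroup.subset)
    hence "card N < card (\<Union>Mb)" "card (\<Union>Mb) \<le> card (carrier G)"
      using psubset_card_mono[OF finite_subset[OF _ fin]] N.FactGroup_subgroup_Union_psubset[OF sub Mb(3)]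
        card_mono[OF fin] by auto
    hence IH: "nested_GVZ_on G (Irr_mod G (\<Union>Mb))" using less.hyps M by simp
    have "Irr_mod G N \<subseteq> Irr_mod G (\<Union>Mb) \<union> {\<chi> \<in> Irr_mod G N. \<not> \<Union>Mb \<subseteq> char_ker G \<chi>}"
      unfolding Irr_mod_def by blast
    moreover have "nested_GVZ_on G (Irr_mod G (\<Union>Mb) \<union> {\<chi> \<in> Irr_mod G N. \<not> \<Union>Mb \<subseteq> char_ker G \<chi>})"
    proof (rule nested_GVZ_on_Un_constant_center[OF IH])
      fix \<chi> assume "\<chi> \<in> {\<chi> \<in> Irr_mod G N. \<not> \<Union>Mb \<subseteq> char_ker G \<chi>}"
      thus "char_center G \<chi> = ?Z \<and> (\<forall>g\<in>carrier G - ?Z. \<chi> g = 0)"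
        using Irr_mod_char_center_eq_center_preimage[OF grp fin less.prems sub Mb(2)] by auto
    next
      fix \<chi> assume "\<chi> \<in> Irr_mod G (\<Union>Mb)"
      hence "\<chi> \<in> Irr_mod G N"
        using N.FactGroup_subgroup_Union_psubset[OF sub Mb(3)] unfolding Irr_mod_def by auto
      thus "?Z \<subseteq> char_center G \<chi>" by (rule Irr_mod_center_preimage_subset_char_center[OF grp fin less.prems])
    qed
    ultimately show ?thesis by (rule nested_GVZ_on_subset[rotated])
  qed
qed

theorem theoremI:
  fixes G :: "('a, 'b) monoid_scheme"
  assumes "group G" and "finite (carrier G)"
  shows "(nested_group G \<and> GVZ_group G) \<longleftrightarrow>
    (\<forall>N. N \<lhd> G \<and> N \<noteq> carrier G \<longrightarrow> U_grp (G Mod N) \<noteq> {\<one>\<^bsub>G Mod N\<^esub>})"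
proof
  assume "nested_group G \<and> GVZ_group G"
  thus "\<forall>N. N \<lhd> G \<and> N \<noteq> carrier G \<longrightarrow> U_grp (G Mod N) \<noteq> {\<one>\<^bsub>G Mod N\<^esub>}"
    using U_grp_FactGroup_nontrivial_if_nested_GVZ[OF assms] by blast
next
  assume "\<forall>N. N \<lhd> G \<and> N \<noteq> carrier G \<longrightarrow> U_grp (G Mod N) \<noteq> {\<one>\<^bsub>G Mod N\<^esub>}"
  hence "nested_GVZ_on G (Irr_mod G {\<one>\<^bsub>G\<^esub>})"
    using nested_GVZ_on_Irr_mod[OF assms] group.one_is_normal[OF assms(1)] by blast
  moreover have "Irr_mod G {\<one>\<^bsub>G\<^esub>} = Irr G"
    using char_ker_normal[OF assms] normal_imp_subgroup subgroup.one_closed unfolding Irr_mod_def by blast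
  ultimately show "nested_group G \<and> GVZ_group G" by (simp add: nested_GVZ_on_Irr_iff)
qed

end
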